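(* Let $G$ be an $\alpha_1$-metric graph and $v$ an arbitrary vertex of $G$. If (i) $e(v)>rad(G)+1$, or (ii) $e(v)=rad(G)+1$ and $diam(G)<2rad(G)-1$, then there exists a neighbor $w$ of $v$ with $e(w)<e(v)$. Moreover, if $e(v)=rad(G)+k$ for some integer $k>0$, then $d(v,C(G))\le k+1$.
   Context: All graphs are finite, connected, unweighted, undirected, simple; $d(u,v)$ is the shortest-path distance. $I(u,v)=\{x: d(u,x)+d(x,v)=d(u,v)\}$. A graph is $\alpha_1$-metric if for all vertices $u,v,w,x$: whenever $v\in I(u,w)$, $w\in I(v,x)$ and $v,w$ are adjacent, then $d(u,x)\ge d(u,v)+d(v,x)-1$. $e(v)=\max_u d(u,v)$, $rad(G)=\min_v e(v)$, $diam(G)=\max_v e(v)$, $C(G)=\{v:e(v)=rad(G)\}$, and $d(v,S)=\min_{s\in S}d(v,s)$. *)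

theory Defs
  imports Main
begin

definition simple_graph :: "'a set \<Rightarrow> ('a \<Rightarrow> 'a \<Rightarrow> bool) \<Rightarrow> bool" where
  "simple_graph V E \<longleftrightarrow> finite V \<and> V \<noteq> {} \<and>
     (\<forall>u v. E u v \<longrightarrow> u \<in> V \<and> v \<in> V) \<and>
     (\<forall>u v. E u v \<longrightarrow> E v u) \<and> (\<forall>u. \<not> E u u)"

definition gwalk :: "('a \<Rightarrow> 'a \<Rightarrow> bool) \<Rightarrow> 'a list \<Rightarrow> bool" where
  "gwalk E p \<longleftrightarrow> p \<noteq> [] \<and> (\<forall>i. Suc i < length p \<longrightarrow> E (p ! i) (p ! Suc i))"

definition connected_graph :: "'a set \<Rightarrow> ('a \<Rightarrow> 'a \<Rightarrow> bool) \<Rightarrow> bool" where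
  "connected_graph V E \<longleftrightarrow> simple_graph V E \<and>
     (\<forall>u\<in>V. \<forall>v\<in>V. \<exists>p. gwalk E p \<and> hd p = u \<and> last p = v)"

definition gdist :: "('a \<Rightarrow> 'a \<Rightarrow> bool) \<Rightarrow> 'a \<Rightarrow> 'a \<Rightarrow> nat" where
  "gdist E u v = (LEAST n. \<exists>p. gwalk E p \<and> hd p = u \<and> last p = v \<and> length p = Suc n)"

definition interval :: "'a set \<Rightarrow> ('a \<Rightarrow> 'a \<Rightarrow> bool) \<Rightarrow> 'a \<Rightarrow> 'a \<Rightarrow> 'a set" where
  "interval V E u v = {x \<in> V. gdist E u x + gdist E x v = gdist E u v}"

definition alpha1_metric :: "'a set \<Rightarrow> ('a \<Rightarrow> 'a \<Rightarrow> bool) \<Rightarrow> bool" where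
  "alpha1_metric V E \<longleftrightarrow> (\<forall>u\<in>V. \<forall>v\<in>V. \<forall>w\<in>V. \<forall>x\<in>V.
     v \<in> interval V E u w \<and> w \<in> interval V E v x \<and> E v w \<longrightarrow>
     gdist E u x + 1 \<ge> gdist E u v + gdist E v x)"

definition ecc :: "'a set \<Rightarrow> ('a \<Rightarrow> 'a \<Rightarrow> bool) \<Rightarrow> 'a \<Rightarrow> nat" where
  "ecc V E v = Max ((\<lambda>u. gdist E u v) ` V)"

definition rad :: "'a set \<Rightarrow> ('a \<Rightarrow> 'a \<Rightarrow> bool) \<Rightarrow> nat" where
  "rad V E = Min (ecc V E ` V)"

definition diam :: "'a set \<Rightarrow> ('a \<Rightarrow> 'a \<Rightarrow> bool) \<Rightarrow> nat" where
  "diam V E = Max (ecc V E ` V)"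

definition center :: "'a set \<Rightarrow> ('a \<Rightarrow> 'a \<Rightarrow> bool) \<Rightarrow> 'a set" where
  "center V E = {v \<in> V. ecc V E v = rad V E}"

definition setdist :: "('a \<Rightarrow> 'a \<Rightarrow> bool) \<Rightarrow> 'a \<Rightarrow> 'a set \<Rightarrow> nat" where
  "setdist E v S = Min ((\<lambda>s. gdist E v s) ` S)"

end

theory Submission
  imports Defs
begin

(* Let e = e(v). Both hypotheses of the first claim give diam(G) + 4 <= 2e, since diam(G) <= 2 rad(G),
   so any two vertices t, t' farthest from v satisfy d(t,t') + 4 <= d(v,t) + d(v,t'). For such a pair the
   alpha_1 inequality yields a neighbour of v on shortest paths to both t and t' (induction along a
   shortest (t,t')-path), and a Helly-type argument, based on the fact that two neighbours of v stepping
   toward a common vertex are adjacent, yields one neighbour doing so for all farthest vertices at once;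
   its eccentricity is e - 1.
   For the second claim let c be a central vertex closest to v and c' the next vertex on a shortest
   (c,v)-path. If d(v,c) > e(v) - rad(G) + 1, then c' is not central, so some u has d(u,c) = rad(G) and
   d(u,c') = rad(G) + 1; the alpha_1 inequality for u, c, c', v gives e(v) >= d(u,v) >= rad(G) + d(c,v) - 1. *)

lemma gwalk_iff_successively: "gwalk E p \<longleftrightarrow> p \<noteq> [] \<and> successively E p"
  by (simp add: gwalk_def successively_conv_nth)

lemma gwalk_append:
  assumes "gwalk E p" "gwalk E q" "last p = hd q"
  shows "gwalk E (p @ tl q) \<and> hd (p @ tl q) = hd p \<and> last (p @ tl q) = last q"
proof -
  obtain x xs where "q = x # xs" using assms(2) by (cases q) (auto simp: gwalk_def)
  then show ?thesis
    using assms by (cases xs) (auto simp: gwalk_iff_successively successively_append_iff)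
qed

lemma gwalk_rev:
  assumes "\<And>u v. E u v \<Longrightarrow> E v u" "gwalk E p"
  shows "gwalk E (rev p)"
  using assms by (auto simp: gwalk_iff_successively elim: successively_mono)

locale connected_simple_graph =
  fixes V :: "'a set" and E :: "'a \<Rightarrow> 'a \<Rightarrow> bool"
  assumes connected: "connected_graph V E"
begin

lemma finite_V: "finite V" and V_nonempty: "V \<noteq> {}"
  and adj_in_V: "E u v \<Longrightarrow> u \<in> V \<and> v \<in> V"
  and adj_sym: "E u v \<Longrightarrow> E v u" and adj_irrefl: "\<not> E u u"
  using connected unfolding connected_graph_def simple_graph_def by blast+

abbreviation d :: "'a \<Rightarrow> 'a \<Rightarrow> nat" where "d u v \<equiv> gdist E u v"

lemma shortest_walk_exists:
  assumes "u \<in> V" "v \<in> V"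
  shows "\<exists>p. gwalk E p \<and> hd p = u \<and> last p = v \<and> length p = Suc (d u v)"
proof -
  obtain p where p: "gwalk E p" "hd p = u" "last p = v"
    using connected assms unfolding connected_graph_def by blast
  then have "length p = Suc (length p - 1)" by (simp add: gwalk_def)
  then have "\<exists>n p. gwalk E p \<and> hd p = u \<and> last p = v \<and> length p = Suc n"
    using p by blast
  then show ?thesis unfolding gdist_def by (rule LeastI_ex)
qed

lemma dist_le_walk_length:
  assumes "gwalk E p" "hd p = u" "last p = v"
  shows "d u v \<le> length p - 1"
proof -
  have "length p = Suc (length p - 1)" using assms by (simp add: gwalk_def)
  then show ?thesis unfolding gdist_def using assms by (intro Least_le) blast
qed

lemma dist_self [simp]: "d u u = 0"
  using dist_le_walk_length[of "[u]" u u] by (simp add: gwalk_def)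

lemma dist_sym:
  assumes "u \<in> V" "v \<in> V"
  shows "d u v = d v u"
proof -
  have "d a b \<le> d b a" if ab: "a \<in> V" "b \<in> V" for a b
  proof -
    obtain p where p: "gwalk E p" "hd p = b" "last p = a" "length p = Suc (d b a)"
      using shortest_walk_exists[OF ab(2,1)] by blast
    then have "p \<noteq> []" by (simp add: gwalk_def)
    then have "d a b \<le> length (rev p) - 1"
      using p gwalk_rev[OF adj_sym p(1)] by (intro dist_le_walk_length) (auto simp: hd_rev last_rev)
    then show ?thesis using p by simp
  qed
  then show ?thesis using assms by (simp add: le_antisym)
qed

lemma dist_triangle:
  assumes "u \<in> V" "v \<in> V" "w \<in> V"
  shows "d u w \<le> d u v + d v w"
proof -
  obtain p where p: "gwalk E p" "hd p = u" "last p = v" "length p = Suc (d u v)"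
    using shortest_walk_exists assms by blast
  obtain q where q: "gwalk E q" "hd q = v" "last q = w" "length q = Suc (d v w)"
    using shortest_walk_exists assms by blast
  have "d u w \<le> length (p @ tl q) - 1"
    using p q gwalk_append[OF p(1) q(1)] by (intro dist_le_walk_length) auto
  then show ?thesis using p q by simp
qed

lemma dist_eq_0_imp_eq:
  assumes "u \<in> V" "v \<in> V" "d u v = 0"
  shows "u = v"
proof -
  obtain p where "gwalk E p" "hd p = u" "last p = v" "length p = 1"
    using shortest_walk_exists assms by fastforce
  then show ?thesis by (cases p) auto
qed

lemma dist_adj:
  assumes "E u v"
  shows "d u v = 1"
proof -
  have "d u v \<le> 1" using dist_le_walk_length[of "[u, v]" u v] assms by (simp add: gwalk_def)
  moreover have "d u v \<noteq> 0" using dist_eq_0_imp_eq assms adj_in_V adj_irrefl by blast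
  ultimately show ?thesis by simp
qed

lemma adj_if_dist_1:
  assumes "u \<in> V" "v \<in> V" "d u v = 1"
  shows "E u v"
proof -
  obtain p where p: "gwalk E p" "hd p = u" "last p = v" "length p = 2"
    using shortest_walk_exists assms by fastforce
  then obtain x y where "p = [x, y]" by (metis length_0_conv length_Suc_conv numeral_2_eq_2)
  then show ?thesis using p by (simp add: gwalk_def)
qed

lemma dist_adj_le:
  assumes "E u w" "x \<in> V"
  shows "d u x \<le> d w x + 1"
  using dist_triangle[of u w x] dist_adj assms adj_in_V by fastforce

lemma dist_common_neighbor:
  assumes "E v y" "E v y'" "y \<noteq> y'" "\<not> E y y'"
  shows "d y y' = 2"
proof -
  have V: "v \<in> V" "y \<in> V" "y' \<in> V" using assms adj_in_V by blast+
  have "d y y' \<le> d y v + d v y'" using dist_triangle V by blast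
  moreover have "d y v = 1" "d v y' = 1" using dist_adj adj_sym assms by blast+
  moreover have "d y y' \<noteq> 0" "d y y' \<noteq> 1"
    using dist_eq_0_imp_eq adj_if_dist_1 V assms by blast+
  ultimately show ?thesis by linarith
qed

lemma neighbor_toward:
  assumes "u \<in> V" "v \<in> V" "u \<noteq> v"
  shows "\<exists>w. E u w \<and> d w v + 1 = d u v"
proof -
  obtain p where p: "gwalk E p" "hd p = u" "last p = v" "length p = Suc (d u v)"
    using shortest_walk_exists assms by blast
  have "d u v \<noteq> 0" using dist_eq_0_imp_eq assms by blast
  then obtain w ws where pe: "p = u # w # ws"
    using p by (cases p; cases "tl p") auto
  have "E u w" and "gwalk E (w # ws)" using p pe by (auto simp: gwalk_iff_successively)
  then have "d w v \<le> length ws" using dist_le_walk_length[of "w # ws" w v] p pe by simp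
  moreover have "d u v \<le> d u w + d w v" using dist_triangle assms adj_in_V \<open>E u w\<close> by blast
  ultimately show ?thesis using p pe \<open>E u w\<close> dist_adj[OF \<open>E u w\<close>] by (intro exI[of _ w]) auto
qed

lemma dist_le_ecc: "u \<in> V \<Longrightarrow> d u v \<le> ecc V E v"
  unfolding ecc_def using finite_V by (intro Max_ge) auto

lemma ecc_attained: "\<exists>u\<in>V. d u v = ecc V E v"
proof -
  have "ecc V E v \<in> (\<lambda>u. d u v) ` V" unfolding ecc_def using finite_V V_nonempty by (intro Max_in) auto
  then show ?thesis by auto
qed

lemma rad_le_ecc: "v \<in> V \<Longrightarrow> rad V E \<le> ecc V E v"
  unfolding rad_def using finite_V by (intro Min_le) auto

lemma center_nonempty: "center V E \<noteq> {}"
proof -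
  have "rad V E \<in> ecc V E ` V" unfolding rad_def using finite_V V_nonempty by (intro Min_in) auto
  then show ?thesis unfolding center_def by auto
qed

lemma dist_le_diam:
  assumes "u \<in> V" "v \<in> V"
  shows "d u v \<le> diam V E"
proof -
  have "ecc V E v \<le> diam V E" unfolding diam_def using finite_V assms by (intro Max_ge) auto
  then show ?thesis using dist_le_ecc[OF assms(1)] by (rule le_trans[rotated])
qed

lemma diam_le_2_rad: "diam V E \<le> 2 * rad V E"
proof -
  obtain x where x: "x \<in> V" "ecc V E x = diam V E"
  proof -
    have "diam V E \<in> ecc V E ` V" unfolding diam_def using finite_V V_nonempty by (intro Max_in) auto
    then show ?thesis using that by auto
  qed
  obtain u where u: "u \<in> V" "d u x = ecc V E x" using ecc_attained by blast
  obtain c where c: "c \<in> center V E" using center_nonempty by blast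
  then have cV: "c \<in> V" and ecc_c: "ecc V E c = rad V E" by (simp_all add: center_def)
  have "d u x \<le> d u c + d c x" using dist_triangle u(1) cV x(1) by blast
  also have "\<dots> \<le> rad V E + rad V E"
    using dist_le_ecc[OF u(1), of c] dist_le_ecc[OF x(1), of c] dist_sym[OF cV x(1)] ecc_c
    by (intro add_mono) simp_all
  finally show ?thesis using u x by simp
qed

end

locale alpha1_graph = connected_simple_graph +
  assumes alpha1: "alpha1_metric V E"
begin

lemma alpha1_ineq:
  assumes "u \<in> V" "x \<in> V" "E v w"
    and "d u v + d v w = d u w" and "d v w + d w x = d v x"
  shows "d u v + d v x \<le> d u x + 1"
  using alpha1 assms adj_in_V[OF assms(3)] unfolding alpha1_metric_def interval_def by auto

(* "E v y \<and> d y t + 1 = d v t" says that y is the second vertex of a shortest (v,t)-path. *)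

lemma toward_away_bound:
  assumes "E v y" "s \<in> V" "t \<in> V" "d y t + 1 = d v t" "d y s = d v s + 1"
  shows "d v s + d v t \<le> d s t + 1"
proof -
  have V: "v \<in> V" "y \<in> V" using adj_in_V assms(1) by blast+
  have "d s v + d v y = d s y"
    using assms(5) dist_adj[OF assms(1)] dist_sym[OF assms(2) V(1)] dist_sym[OF assms(2) V(2)] by simp
  moreover have "d v y + d y t = d v t" using assms(4) dist_adj[OF assms(1)] by simp
  ultimately have "d s v + d v t \<le> d s t + 1" using alpha1_ineq assms(1-3) by blast
  then show ?thesis using dist_sym[OF V(1) assms(2)] by simp
qed

lemma toward_far_not_away:
  assumes "E v y" "s \<in> V" "t \<in> V" "d y t + 1 = d v t" "d s t + 2 \<le> d v s + d v t"
  shows "d y s \<le> d v s"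
proof -
  have "d y s \<le> d v s + 1" using dist_adj_le[OF adj_sym[OF assms(1)] assms(2)] .
  moreover have "d y s \<noteq> d v s + 1" using toward_away_bound[OF assms(1-4)] assms(5) by fastforce
  ultimately show ?thesis by simp
qed

lemma neighbors_toward_adjacent:
  assumes "E v y" "E v y'" "y \<noteq> y'" "t \<in> V" "d y t + 1 = d v t" "d y' t + 1 = d v t"
  shows "E y y'"
proof (rule ccontr)
  assume "\<not> E y y'"
  then have "d y y' = 2" using dist_common_neighbor assms(1-3) by blast
  then have "d y v + d v y' = d y y'"
    using dist_adj[OF adj_sym[OF assms(1)]] dist_adj[OF assms(2)] by simp
  moreover have "d v y' + d y' t = d v t" using dist_adj[OF assms(2)] assms(6) by simp
  ultimately have "d y v + d v t \<le> d y t + 1"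
    using alpha1_ineq[of y t v y'] adj_in_V assms(1,2,4) by blast
  then show False using assms(5) dist_adj[OF adj_sym[OF assms(1)]] by simp
qed

(* The induction step of common_neighbor_toward_pair: q is the next vertex on a shortest (t,t')-path,
   and w is given by the induction hypothesis for the pair (q,t'). *)

lemma toward_pair_step:
  assumes V: "v \<in> V" "t \<in> V" "t' \<in> V"
    and q: "E t q" "d q t' + 1 = d t t'"
    and far: "d t t' + 4 \<le> d v t + d v t'"
    and y: "E v y" "d y t + 1 = d v t"
    and w: "E v w" "d w q + 1 = d v q" "d w t' + 1 = d v t'"
  shows "d y t' + 1 = d v t' \<or> d w t + 1 = d v t"
proof (rule ccontr)
  assume "\<not> ?thesis"
  then have not_y: "d y t' + 1 \<noteq> d v t'" and not_w: "d w t + 1 \<noteq> d v t" by auto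
  have qyw: "q \<in> V" "y \<in> V" "w \<in> V" using adj_in_V q(1) y(1) w(1) by blast+
  have tq: "d t q = 1" "d q t = 1" using dist_adj q(1) adj_sym by blast+
  have vy: "d v y = 1" "d y v = 1" and vw: "d v w = 1" "d w v = 1"
    using dist_adj y(1) w(1) adj_sym by blast+
  have sym: "d t y = d y t" "d w t = d t w" "d q w = d w q" "d q v = d v q" "d q y = d y q"
    using dist_sym V qyw by metis+
  have yt': "d y t' = d v t'"
    using toward_far_not_away[OF y(1) V(3) V(2) y(2)] far not_y dist_adj_le[OF y(1) V(3)]
      dist_sym[OF V(2,3)] by simp
  have wt: "d w t = d v t"
    using toward_far_not_away[OF w(1) V(2) V(3) w(3)] far not_w dist_adj_le[OF w(1) V(2)] by simp
  have "\<not> E y w"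
  proof
    assume "E y w"
    then have "d y w = 1" by (rule dist_adj)
    then have "d t y + d y t' \<le> d t t' + 1"
      using alpha1_ineq[OF V(2,3) \<open>E y w\<close>] y(2) w(3) yt' wt sym by simp
    then show False using far y(2) yt' sym by simp
  qed
  moreover have "y \<noteq> w" using wt y(2) by auto
  ultimately have yw: "d y w = 2" "d w y = 2"
    using dist_common_neighbor y(1) w(1) dist_sym qyw by metis+
  have "d q w + d w y \<le> d q y + 1"
    using alpha1_ineq[OF qyw(1,2) adj_sym[OF w(1)]] w(2) vy vw yw sym by simp
  then have "d v q \<le> d q y" using w(2) yw sym by simp
  moreover have "d q y \<le> d q t + d t y" "d w t \<le> d w q + d q t" using dist_triangle V qyw by blast+
  ultimately have vq: "d v q = d v t" and qy: "d y q = d v t" using w(2) y(2) wt tq sym by simp_all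
  have "d y t + d t w \<le> d y w + 1"
    using alpha1_ineq[OF qyw(2,3) q(1)] y(2) w(2) tq vq qy wt sym by simp
  then have "d v t \<le> 2" using y(2) yw wt sym by simp
  moreover have "d y t' \<le> d y t + d t t'" using dist_triangle V qyw by blast
  ultimately show False using far y(2) yt' by simp
qed

lemma common_neighbor_toward_pair:
  assumes "v \<in> V" "t \<in> V" "t' \<in> V" "d t t' + 4 \<le> d v t + d v t'"
  shows "\<exists>w. E v w \<and> d w t + 1 = d v t \<and> d w t' + 1 = d v t'"
  using assms(2-4)
proof (induction "d t t'" arbitrary: t)
  case 0
  then have "t = t'" using dist_eq_0_imp_eq assms(3) by metis
  moreover have "v \<noteq> t" using 0 by auto
  ultimately show ?case using neighbor_toward assms(1) 0 by blast
next
  case (Suc L t)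
  have "t \<noteq> t'" using Suc.hyps(2) by auto
  then obtain q where q: "E t q" "d q t' + 1 = d t t'" using neighbor_toward Suc.prems assms(3) by blast
  have qV: "q \<in> V" using adj_in_V q(1) by blast
  have "d v t \<le> d v q + d q t" using dist_triangle assms(1) qV Suc.prems(1) by blast
  then have "d q t' + 4 \<le> d v q + d v t'" using q Suc.prems(3) dist_adj[OF adj_sym[OF q(1)]] by simp
  then obtain w where w: "E v w" "d w q + 1 = d v q" "d w t' + 1 = d v t'"
    using Suc.hyps(1)[of q] q Suc.hyps(2) qV assms(3) by auto
  have "v \<noteq> t" using Suc.prems(3) by auto
  then obtain y where y: "E v y" "d y t + 1 = d v t" using neighbor_toward assms(1) Suc.prems(1) by blast
  show ?case
    using toward_pair_step[OF assms(1) Suc.prems(1) assms(3) q Suc.prems(3) y w] y w by blast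
qed

lemma toward_triple_step:
  assumes V: "v \<in> V" "t0 \<in> V" "t1 \<in> V" "t2 \<in> V"
    and far: "d t0 t1 + 4 \<le> d v t0 + d v t1"
    and y0: "E v y0" "d y0 t1 + 1 = d v t1" "d y0 t2 + 1 = d v t2"
    and y1: "E v y1" "d y1 t0 + 1 = d v t0" "d y1 t2 + 1 = d v t2"
  shows "d y0 t0 + 1 = d v t0 \<or> d y1 t1 + 1 = d v t1"
proof (rule ccontr)
  assume "\<not> ?thesis"
  then have not_y0: "d y0 t0 + 1 \<noteq> d v t0" and not_y1: "d y1 t1 + 1 \<noteq> d v t1" by auto
  have yV: "y0 \<in> V" "y1 \<in> V" using adj_in_V y0(1) y1(1) by blast+
  have "y0 \<noteq> y1" using not_y0 y1(2) by auto
  then have "E y0 y1" using neighbors_toward_adjacent[OF y0(1) y1(1) _ V(4) y0(3) y1(3)] by blast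
  have y0t0: "d y0 t0 = d v t0"
    using toward_far_not_away[OF y0(1) V(2) V(3) y0(2)] far not_y0 dist_adj_le[OF y0(1) V(2)] by simp
  have y1t1: "d y1 t1 = d v t1"
    using toward_far_not_away[OF y1(1) V(3) V(2) y1(2)] far not_y1 dist_adj_le[OF y1(1) V(3)]
      dist_sym[OF V(2,3)] by simp
  have "d t1 y0 + d y0 t0 \<le> d t1 t0 + 1"
    using alpha1_ineq[OF V(3,2) \<open>E y0 y1\<close>] dist_adj[OF \<open>E y0 y1\<close>] y0 y1 y0t0 y1t1
      dist_sym[OF V(3) yV(1)] dist_sym[OF V(3) yV(2)] by simp
  then show False using far y0(2) y0t0 dist_sym[OF V(3) yV(1)] dist_sym[OF V(2,3)] by simp
qed

lemma common_neighbor_toward_all: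
  assumes "v \<in> V" "finite T" "T \<noteq> {}" "T \<subseteq> V"
    and "\<forall>t\<in>T. \<forall>t'\<in>T. d t t' + 4 \<le> d v t + d v t'"
  shows "\<exists>y. E v y \<and> (\<forall>t\<in>T. d y t + 1 = d v t)"
  using assms(2-5)
proof (induction T rule: finite_psubset_induct)
  case (psubset T)
  obtain t0 where t0: "t0 \<in> T" using psubset.prems by blast
  show ?case
  proof (cases "\<exists>t1\<in>T. T \<subseteq> {t0, t1}")
    case True
    then obtain t1 where "t1 \<in> T" "T \<subseteq> {t0, t1}" by blast
    then show ?thesis
      using common_neighbor_toward_pair[OF assms(1), of t0 t1] t0 psubset.prems by blast
  next
    case False
    then obtain t1 t2 where t12: "t1 \<in> T" "t2 \<in> T" "t1 \<noteq> t0" "t2 \<noteq> t0" "t2 \<noteq> t1"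
      using t0 by blast
    obtain y0 where y0: "E v y0" "\<forall>t\<in>T - {t0}. d y0 t + 1 = d v t"
      using psubset.IH[of "T - {t0}"] psubset.prems t0 t12 by blast
    obtain y1 where y1: "E v y1" "\<forall>t\<in>T - {t1}. d y1 t + 1 = d v t"
      using psubset.IH[of "T - {t1}"] psubset.prems t0 t12 by blast
    have "d y0 t0 + 1 = d v t0 \<or> d y1 t1 + 1 = d v t1"
      using toward_triple_step[OF assms(1), of t0 t1 t2 y0 y1] psubset.prems t0 t12 y0 y1 by blast
    then show ?thesis using y0 y1 by blast
  qed
qed

lemma ecc_decreasing_neighbor:
  assumes "v \<in> V" "diam V E + 4 \<le> 2 * ecc V E v"
  shows "\<exists>y. E v y \<and> ecc V E y < ecc V E v"
proof -
  define e where "e = ecc V E v"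
  define T where "T = {t \<in> V. d v t = e}"
  obtain u where u: "u \<in> V" "d u v = e" using ecc_attained unfolding e_def by blast
  then have vu: "d v u = e" using dist_sym assms(1) by simp
  then have uT: "u \<in> T" unfolding T_def using u(1) by simp
  have diam: "d s t + 4 \<le> e + e" if "s \<in> V" "t \<in> V" for s t
    using dist_le_diam[OF that] assms(2) unfolding e_def by simp
  have far: "\<forall>t\<in>T. \<forall>t'\<in>T. d t t' + 4 \<le> d v t + d v t'"
    unfolding T_def using diam by simp
  have "finite T" "T \<noteq> {}" "T \<subseteq> V" using finite_V uT unfolding T_def by auto
  from common_neighbor_toward_all[OF assms(1) this far]
  obtain y where y: "E v y" and y_toward: "\<And>t. t \<in> T \<Longrightarrow> d y t + 1 = d v t"
    by blast
  have yV: "y \<in> V" using adj_in_V y by blast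
  have "d y s < e" if s: "s \<in> V" for s
  proof -
    have "d v s \<le> e" using dist_le_ecc[OF s, of v] dist_sym[OF s assms(1)] unfolding e_def by simp
    then consider "d v s = e" | "d v s + 1 = e" | "d v s + 2 \<le> e" by linarith
    then show ?thesis
    proof cases
      case 1
      then have "s \<in> T" unfolding T_def using s by simp
      then show ?thesis using y_toward[of s] 1 by simp
    next
      case 2
      then show ?thesis
        using toward_far_not_away[OF y s u(1) y_toward[OF uT]] vu diam[OF s u(1)] by simp
    next
      case 3
      then show ?thesis using dist_adj_le[OF adj_sym[OF y] s] by simp
    qed
  qed
  moreover obtain s where "s \<in> V" "d s y = ecc V E y" using ecc_attained by blast
  ultimately have "ecc V E y < e" using dist_sym[OF yV] by metis
  then show ?thesis using y unfolding e_def by blast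
qed

lemma setdist_center_le:
  assumes "v \<in> V"
  shows "setdist E v (center V E) + rad V E \<le> ecc V E v + 1"
proof (rule ccontr)
  assume too_far: "\<not> ?thesis"
  have fin: "finite (center V E)" using finite_V unfolding center_def by simp
  have "setdist E v (center V E) \<in> (\<lambda>s. d v s) ` center V E"
    unfolding setdist_def using fin center_nonempty by (intro Min_in) auto
  then obtain c where c: "c \<in> center V E" "d v c = setdist E v (center V E)" by auto
  have closest: "d v c \<le> d v c'" if "c' \<in> center V E" for c'
    using c(2) fin that unfolding setdist_def by simp
  have cV: "c \<in> V" and ecc_c: "ecc V E c = rad V E" using c(1) unfolding center_def by auto
  have "c \<noteq> v" using too_far c(2) rad_le_ecc[OF assms] by auto
  then obtain c' where c': "E c c'" "d c' v + 1 = d c v" using neighbor_toward cV assms by blast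
  have c'V: "c' \<in> V" using adj_in_V c'(1) by blast
  have "c' \<notin> center V E"
    using closest c' dist_sym[OF assms cV] dist_sym[OF assms c'V] by fastforce
  then have "rad V E < ecc V E c'" using rad_le_ecc[OF c'V] c'V unfolding center_def by auto
  obtain u where u: "u \<in> V" "d u c' = ecc V E c'" using ecc_attained by blast
  have "d u c' \<le> d u c + d c c'" using dist_triangle u(1) cV c'V by blast
  moreover have "d u c \<le> rad V E" using dist_le_ecc[OF u(1), of c] ecc_c by simp
  ultimately have uc: "d u c = rad V E" and uc': "d u c' = rad V E + 1"
    using u(2) \<open>rad V E < ecc V E c'\<close> dist_adj[OF c'(1)] by simp_all
  have "d u c + d c v \<le> d u v + 1"
    using alpha1_ineq[OF u(1) assms c'(1)] uc uc' c'(2) dist_adj[OF c'(1)] by simp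
  moreover have "d u v \<le> ecc V E v" using dist_le_ecc[OF u(1)] .
  ultimately show False using too_far uc c(2) dist_sym[OF assms cV] by simp
qed

end

theorem theorem6:
  fixes V :: "'a set" and E :: "'a \<Rightarrow> 'a \<Rightarrow> bool" and v :: 'a
  assumes "connected_graph V E" and "alpha1_metric V E" and "v \<in> V"
  shows "((ecc V E v > rad V E + 1 \<or>
           (ecc V E v = rad V E + 1 \<and> int (diam V E) < 2 * int (rad V E) - 1))
          \<longrightarrow> (\<exists>w. E v w \<and> ecc V E w < ecc V E v))
       \<and> (\<forall>k::nat. k > 0 \<and> ecc V E v = rad V E + k
          \<longrightarrow> setdist E v (center V E) \<le> k + 1)"
proof -
  interpret alpha1_graph V E using assms(1,2) by unfold_locales
  show ?thesis
  proof (intro conjI impI allI)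
    assume "ecc V E v > rad V E + 1 \<or>
      (ecc V E v = rad V E + 1 \<and> int (diam V E) < 2 * int (rad V E) - 1)"
    then have "diam V E + 4 \<le> 2 * ecc V E v" using diam_le_2_rad by linarith
    then show "\<exists>w. E v w \<and> ecc V E w < ecc V E v" using ecc_decreasing_neighbor assms(3) by blast
  next
    fix k :: nat
    assume "k > 0 \<and> ecc V E v = rad V E + k"
    then show "setdist E v (center V E) \<le> k + 1" using setdist_center_le[OF assms(3)] by simp
  qed
qed

end
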